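(* Let $(X,d)$ be a metric space, let $k\in[0,1)$, let $S,T:X\to X$ be mappings, and let $\phi:[0,+\infty)\to[0,+\infty)$ be a nonnegative Lebesgue-integrable function, summable on each compact subset of $[0,+\infty)$, such that $\int_0^{\epsilon}\phi(t)\,dt>0$ for each $\epsilon>0$. Suppose that for all $x,y\in X$, \[\int_0^{d(TSx,TSy)}\phi(t)\,dt\le k\int_0^{m'(Tx,Ty)}\phi(t)\,dt,\] where $m'(Tx,Ty)=\max\{d(Tx,Ty),d(Tx,TSx),d(Ty,TSy),\tfrac{d(Tx,TSy)+d(Ty,TSx)}{2}\}$. Fix $x\in X$ and put $x_n=TS^nx$ for $n\ge 0$. Then the sequence $\{x_n\}$ is bounded.
   Context: $S^n$ denotes the $n$-fold iterate of $S$ ($S^0$ the identity). *)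

theory Defs
  imports "HOL-Analysis.Analysis"
begin

text \<open>The quantity m'(Tx,Ty) from the paper, written for points u = Tx, v = Ty
  and their images us = TSx, vs = TSy.\<close>
definition mprime :: "'a::metric_space \<Rightarrow> 'a \<Rightarrow> 'a \<Rightarrow> 'a \<Rightarrow> real" where
  "mprime u v us vs = Max {dist u v, dist u us, dist v vs, (dist u vs + dist v us) / 2}"

end

theory Submission
  imports Defs
begin

text \<open>
  Write F r for the integral of \<phi> over [0, r] and p n = T (S^n x).  The
  hypothesis says F (d(p (i+1), p (j+1))) \<le> k F (m'(p i, p j)) for all i, j, where F is
  nondecreasing, positive on (0, \<infinity>) and continuous.
\<close>

lemma mprime_le:
  "dist u v \<le> B \<Longrightarrow> dist u us \<le> B \<Longrightarrow> dist v vs \<le> B \<Longrightarrow> (dist u vs + dist v us) / 2 \<le> B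
   \<Longrightarrow> mprime u v us vs \<le> B"
  by (simp add: mprime_def)

lemma mprime_ge_dist: "dist u v \<le> mprime u v us vs"
  by (simp add: mprime_def)

lemma mprime_nonneg: "0 \<le> mprime u v us vs"
  using mprime_ge_dist zero_le_dist order_trans by blast

text \<open>An abstract sequence satisfying the contractive condition of the theorem with respect to
  a nondecreasing, positive, continuous control function F (standing for the integral of \<phi> over [0, r]).\<close>
locale control_contractive_sequence =
  fixes F :: "real \<Rightarrow> real" and k :: real and p :: "nat \<Rightarrow> 'a::metric_space"
  assumes k: "0 \<le> k" "k < 1"
    and F_mono: "\<And>a b. 0 \<le> a \<Longrightarrow> a \<le> b \<Longrightarrow> F a \<le> F b"
    and F_pos: "\<And>r. 0 < r \<Longrightarrow> 0 < F r"
    and F_cont: "\<And>b. continuous_on {0..b} F"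
    and contractive: "\<And>i j. F (dist (p (Suc i)) (p (Suc j)))
                          \<le> k * F (mprime (p i) (p j) (p (Suc i)) (p (Suc j)))"
begin

definition step_dist :: "nat \<Rightarrow> real" where
  "step_dist n = dist (p n) (p (Suc n))"

lemma step_dist_nonneg: "0 \<le> step_dist n"
  by (simp add: step_dist_def)

lemma k_F_mono: "0 \<le> a \<Longrightarrow> a \<le> b \<Longrightarrow> k * F a \<le> k * F b"
  using F_mono k by (simp add: mult_left_mono)

lemma no_self_contraction:
  assumes "0 < r" shows "\<not> F r \<le> k * F r"
  using F_pos[OF assms] k by (simp add: mult_le_cancel_right2 not_le)

text \<open>Step (1): for adjacent indices m' is bounded by the larger of two consecutive steps, so
  the steps decrease and F of a step is contracted by the factor k.\<close>
lemma step_dist_contracts: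
  "step_dist (Suc n) \<le> step_dist n \<and> F (step_dist (Suc n)) \<le> k * F (step_dist n)"
proof -
  let ?M = "mprime (p n) (p (Suc n)) (p (Suc n)) (p (Suc (Suc n)))"
  have contr: "F (step_dist (Suc n)) \<le> k * F ?M"
    using contractive[of n "Suc n"] by (simp add: step_dist_def)
  have "dist (p n) (p (Suc (Suc n))) \<le> step_dist n + step_dist (Suc n)"
    unfolding step_dist_def by (rule dist_triangle)
  then have M_le: "?M \<le> max (step_dist n) (step_dist (Suc n))"
    by (intro mprime_le) (auto simp: step_dist_def)
  have decreasing: "step_dist (Suc n) \<le> step_dist n"
  proof (rule ccontr)
    assume less: "\<not> step_dist (Suc n) \<le> step_dist n"
    then have "?M \<le> step_dist (Suc n)" using M_le by simp
    then have "F (step_dist (Suc n)) \<le> k * F (step_dist (Suc n))"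
      using contr k_F_mono[OF mprime_nonneg] by (meson order_trans)
    moreover have "0 < step_dist (Suc n)" using less step_dist_nonneg[of n] by linarith
    ultimately show False using no_self_contraction by blast
  qed
  then have "?M \<le> step_dist n" using M_le by simp
  then show ?thesis using decreasing contr k_F_mono[OF mprime_nonneg] by (meson order_trans)
qed

lemma F_step_dist_geometric: "F (step_dist n) \<le> k ^ n * F (step_dist 0)"
proof (induction n)
  case (Suc n)
  have "F (step_dist (Suc n)) \<le> k * F (step_dist n)" using step_dist_contracts by blast
  also have "\<dots> \<le> k * (k ^ n * F (step_dist 0))" using Suc k by (simp add: mult_left_mono)
  finally show ?case by simp
qed simp

text \<open>Since F (step_dist n) \<le> k^n F (step_dist 0) \<rightarrow> 0 and F is positive, the steps tend to 0.\<close>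
lemma step_dist_eventually_small:
  assumes e: "0 < e" shows "\<exists>N. \<forall>n\<ge>N. step_dist n < e"
proof -
  have "(\<lambda>n. k ^ n * F (step_dist 0)) \<longlonglongrightarrow> 0 * F (step_dist 0)"
    by (intro tendsto_intros LIMSEQ_power_zero) (use k in auto)
  then have "eventually (\<lambda>n. k ^ n * F (step_dist 0) < F e) sequentially"
    using F_pos[OF e] by (simp add: order_tendsto_iff)
  then obtain N where N: "k ^ N * F (step_dist 0) < F e"
    by (meson eventually_sequentially order_refl)
  have "step_dist N < e"
  proof (rule ccontr)
    assume "\<not> step_dist N < e"
    then have "F e \<le> F (step_dist N)" using F_mono e by simp
    then show False using F_step_dist_geometric[of N] N by simp
  qed
  moreover have "step_dist n \<le> step_dist N" if "N \<le> n" for n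
    using lift_Suc_antimono_le[of step_dist, OF _ that] step_dist_contracts by blast
  ultimately show ?thesis by (meson le_less_trans)
qed

text \<open>Step (2): by uniform continuity of F on [0,3], a sufficiently small increment of an
  argument D \<in> [1,2] is not enough to compensate for the factor k.\<close>
lemma contraction_margin:
  obtains \<eta> where "0 < \<eta>" "\<eta> \<le> 1" "\<And>D h. 1 \<le> D \<Longrightarrow> D \<le> 2 \<Longrightarrow> 0 \<le> h \<Longrightarrow> h < \<eta> \<Longrightarrow> k * F (D + h) < F D"
proof -
  have uc: "uniformly_continuous_on {0..3} F"
    using F_cont by (rule compact_uniformly_continuous) simp
  define e where "e = (1 - k) * F 1"
  have e: "0 < e" using F_pos[of 1] k by (simp add: e_def)
  obtain \<delta> where \<delta>: "0 < \<delta>"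
    "\<And>a b. a \<in> {0..3} \<Longrightarrow> b \<in> {0..3} \<Longrightarrow> dist a b < \<delta> \<Longrightarrow> dist (F a) (F b) < e"
    using uc e unfolding uniformly_continuous_on_def by metis
  have "k * F (D + h) < F D" if D: "1 \<le> D" "D \<le> 2" and h: "0 \<le> h" "h < min \<delta> 1" for D h
  proof -
    have "dist (F (D + h)) (F D) < e"
      by (rule \<delta>(2)) (use D h in \<open>auto simp: dist_real_def\<close>)
    then have "k * F (D + h) \<le> k * (F D + e)"
      using k by (intro mult_left_mono) (auto simp: dist_real_def)
    also have "\<dots> < k * F D + e" using e k by (simp add: algebra_simps)
    also have "\<dots> \<le> k * F D + (1 - k) * F D"
      using F_mono[of 1 D] D k by (simp add: e_def mult_left_mono)
    finally show ?thesis by (simp add: algebra_simps)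
  qed
  then show ?thesis using that[of "min \<delta> 1"] \<delta>(1) by simp
qed

text \<open>Step (3): far out in the sequence no two points are at distance between 1 and 2.  Here
  m' exceeds the distance of the successors only by a multiple of the (small) step lengths.\<close>
lemma no_medium_distances:
  obtains N where "\<And>i j. N \<le> i \<Longrightarrow> N \<le> j \<Longrightarrow>
    \<not> (1 \<le> dist (p (Suc i)) (p (Suc j)) \<and> dist (p (Suc i)) (p (Suc j)) \<le> 2)"
    and "\<And>n. N \<le> n \<Longrightarrow> step_dist n < 1"
proof -
  obtain \<eta> where \<eta>: "0 < \<eta>" "\<eta> \<le> 1"
    and margin: "\<And>D h. 1 \<le> D \<Longrightarrow> D \<le> 2 \<Longrightarrow> 0 \<le> h \<Longrightarrow> h < \<eta> \<Longrightarrow> k * F (D + h) < F D"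
    by (rule contraction_margin) auto
  obtain N where N: "\<And>n. N \<le> n \<Longrightarrow> step_dist n < \<eta> / 4"
    using step_dist_eventually_small[of "\<eta> / 4"] \<eta> by auto
  have "\<not> (1 \<le> dist (p (Suc i)) (p (Suc j)) \<and> dist (p (Suc i)) (p (Suc j)) \<le> 2)"
    if ij: "N \<le> i" "N \<le> j" for i j
  proof
    let ?D = "dist (p (Suc i)) (p (Suc j))"
    let ?h = "2 * step_dist i + 2 * step_dist j"
    assume D: "1 \<le> ?D \<and> ?D \<le> 2"
    have base: "dist (p i) (p j) \<le> ?D + step_dist i + step_dist j"
      using dist_triangle[of "p i" "p j" "p (Suc i)"] dist_triangle[of "p (Suc i)" "p j" "p (Suc j)"]
      by (simp add: step_dist_def dist_commute)
    have cross1: "dist (p i) (p (Suc j)) \<le> dist (p i) (p j) + step_dist j"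
      using dist_triangle[of "p i" "p (Suc j)" "p j"] by (simp add: step_dist_def)
    have cross2: "dist (p j) (p (Suc i)) \<le> dist (p i) (p j) + step_dist i"
      using dist_triangle[of "p j" "p (Suc i)" "p i"] by (simp add: step_dist_def dist_commute)
    note bounds = base cross1 cross2 step_dist_nonneg[of i] step_dist_nonneg[of j]
      step_dist_def[of i] step_dist_def[of j] zero_le_dist[of "p (Suc i)" "p (Suc j)"]
    have "mprime (p i) (p j) (p (Suc i)) (p (Suc j)) \<le> ?D + ?h"
    proof (rule mprime_le)
      have "dist (p i) (p (Suc j)) + dist (p j) (p (Suc i)) \<le> 2 * ?D + 4 * step_dist i + 4 * step_dist j"
        using bounds by linarith
      then show "(dist (p i) (p (Suc j)) + dist (p j) (p (Suc i))) / 2 \<le> ?D + ?h"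
        by simp
    qed (use bounds in linarith)+
    then have "F ?D \<le> k * F (?D + ?h)"
      using contractive[of i j] k_F_mono[OF mprime_nonneg] by (meson order_trans)
    moreover have "k * F (?D + ?h) < F ?D"
      using margin D N[OF ij(1)] N[OF ij(2)] step_dist_nonneg[of i] step_dist_nonneg[of j] by simp
    ultimately show False by simp
  qed
  moreover have "step_dist n < 1" if "N \<le> n" for n using N[OF that] \<eta> by simp
  ultimately show ?thesis using that by blast
qed

text \<open>Step (4): steps shorter than 1 cannot cross the forbidden range [1,2], so the tail stays
  in the unit ball around one of its points; hence the sequence is bounded.\<close>
theorem bounded_range: "bounded (range p)"
proof -
  obtain N where gap: "\<And>i j. N \<le> i \<Longrightarrow> N \<le> j \<Longrightarrow>
      \<not> (1 \<le> dist (p (Suc i)) (p (Suc j)) \<and> dist (p (Suc i)) (p (Suc j)) \<le> 2)"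
    and short: "\<And>n. N \<le> n \<Longrightarrow> step_dist n < 1"
    by (rule no_medium_distances) auto
  have tail: "dist (p (Suc N)) (p (Suc j)) < 1" if "N \<le> j" for j
    using that
  proof (induction j rule: dec_induct)
    case (step n)
    have "dist (p (Suc N)) (p (Suc (Suc n))) \<le> dist (p (Suc N)) (p (Suc n)) + step_dist (Suc n)"
      unfolding step_dist_def by (rule dist_triangle)
    then have "dist (p (Suc N)) (p (Suc (Suc n))) < 2" using step short[of "Suc n"] by simp
    then show ?case using gap[of N "Suc n"] step by simp
  qed simp
  have "range p \<subseteq> p ` {..Suc N} \<union> cball (p (Suc N)) 1"
  proof
    fix y assume "y \<in> range p"
    then obtain n where y: "y = p n" by auto
    show "y \<in> p ` {..Suc N} \<union> cball (p (Suc N)) 1"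
    proof (cases "n \<le> Suc N")
      case False
      then obtain j where "n = Suc j" "N \<le> j" by (cases n) auto
      then show ?thesis using y tail[of j] by simp
    qed (use y in auto)
  qed
  then show ?thesis
    by (rule bounded_subset[rotated]) (simp add: bounded_Un finite_imp_bounded)
qed

end

lemma integral_upto_mono:
  fixes \<phi> :: "real \<Rightarrow> real"
  assumes nonneg: "\<And>t. 0 \<le> t \<Longrightarrow> 0 \<le> \<phi> t" and int: "\<phi> integrable_on {0..b}"
    and ab: "0 \<le> a" "a \<le> b"
  shows "integral {0..a} \<phi> \<le> integral {0..b} \<phi>"
proof -
  have "integral {0..a} \<phi> + integral {a..b} \<phi> = integral {0..b} \<phi>"
    using Henstock_Kurzweil_Integration.integral_combine[OF ab int] .
  moreover have "0 \<le> integral {a..b} \<phi>"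
    using int ab nonneg by (intro integral_nonneg) (auto intro: integrable_on_subinterval)
  ultimately show ?thesis by linarith
qed

lemma integral_upto_continuous:
  fixes \<phi> :: "real \<Rightarrow> real"
  assumes "\<phi> integrable_on {0..b}"
  shows "continuous_on {0..b} (\<lambda>r. integral {0..r} \<phi>)"
  using indefinite_integral_continuous_1[OF assms] .

theorem mainTheorem3:
  fixes S T :: "'a::metric_space \<Rightarrow> 'a" and k :: real and \<phi> :: "real \<Rightarrow> real" and x :: 'a
  assumes k: "0 \<le> k" "k < 1"
    and phi_nonneg: "\<And>t. 0 \<le> t \<Longrightarrow> 0 \<le> \<phi> t"
    and phi_int: "\<And>b. 0 \<le> b \<Longrightarrow> \<phi> absolutely_integrable_on {0..b}"
    and phi_pos: "\<And>\<epsilon>. 0 < \<epsilon> \<Longrightarrow> integral {0..\<epsilon>} \<phi> > 0"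
    and contr: "\<And>y z. integral {0..dist (T (S y)) (T (S z))} \<phi>
                  \<le> k * integral {0..mprime (T y) (T z) (T (S y)) (T (S z))} \<phi>"
  shows "bounded (range (\<lambda>n. T ((S ^^ n) x)))"
proof -
  have int: "\<phi> integrable_on {0..b}" for b
  proof (cases "0 \<le> b")
    case True then show ?thesis using phi_int by (simp add: absolutely_integrable_on_def)
  qed (simp add: integrable_on_empty)
  interpret control_contractive_sequence "\<lambda>r. integral {0..r} \<phi>" k "\<lambda>n. T ((S ^^ n) x)"
  proof
    show "\<And>a b. 0 \<le> a \<Longrightarrow> a \<le> b \<Longrightarrow> integral {0..a} \<phi> \<le> integral {0..b} \<phi>"
      using integral_upto_mono[OF phi_nonneg int] .
    show "\<And>b. continuous_on {0..b} (\<lambda>r. integral {0..r} \<phi>)"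
      using integral_upto_continuous[OF int] .
    show "\<And>i j. integral {0..dist (T ((S ^^ Suc i) x)) (T ((S ^^ Suc j) x))} \<phi>
      \<le> k * integral {0..mprime (T ((S ^^ i) x)) (T ((S ^^ j) x)) (T ((S ^^ Suc i) x)) (T ((S ^^ Suc j) x))} \<phi>"
      using contr by simp
  qed (use k phi_pos in auto)
  show ?thesis by (rule bounded_range)
qed

end
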